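(* Let $G=(V,E)$ be a graph and $\mathcal{C}$ a weighted Max 2-SAT instance over the node variables $\{X_v\}_{v\in V}$ in which any clause containing literals of two distinct variables $X_u,X_v$ satisfies $(u,v)\in E$, and each vertex knows the clauses containing its variable. Given a legal $c$-coloring of $G$, there is a randomized distributed algorithm in the CONGEST model running in $O(c)$ communication rounds which outputs a truth assignment whose expected satisfied weight is at least $3/4$ of the maximum satisfiable weight.
   Context: Weighted Max 2-SAT: clauses with at most two literals each, with nonnegative weights; maximize the total weight of satisfied clauses. CONGEST: synchronous rounds, $O(\log n)$-bit messages per edge per round. A legal coloring gives adjacent vertices different colors. *)

theory Defs
  imports "HOL-Probability.Probability"
begin

(* A literal is (variable, polarity); variables are node identifiers (nat). *)
type_synonym lit = "nat \<times> bool"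
type_synonym clause = "lit list"
type_synonym sat_instance = "(clause \<times> real) list"

definition clause_vars :: "clause \<Rightarrow> nat set" where
  "clause_vars cl = fst ` set cl"

definition sat_clause :: "(nat \<Rightarrow> bool) \<Rightarrow> clause \<Rightarrow> bool" where
  "sat_clause a cl \<longleftrightarrow> (\<exists>(x, p) \<in> set cl. a x = p)"

definition sat_weight :: "sat_instance \<Rightarrow> (nat \<Rightarrow> bool) \<Rightarrow> real" where
  "sat_weight C a = sum_list (map (\<lambda>(cl, w). if sat_clause a cl then w else 0) C)"

definition opt_weight :: "sat_instance \<Rightarrow> real" where
  "opt_weight C = (SUP a. sat_weight C a)"

definition weighted_max2sat :: "sat_instance \<Rightarrow> bool" where
  "weighted_max2sat C \<longleftrightarrow> (\<forall>(cl, w) \<in> set C. length cl \<le> 2 \<and> w \<ge> 0)"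

definition graph :: "nat set \<Rightarrow> (nat \<Rightarrow> nat \<Rightarrow> bool) \<Rightarrow> bool" where
  "graph V E \<longleftrightarrow> finite V \<and> (\<forall>u v. E u v \<longrightarrow> u \<in> V \<and> v \<in> V \<and> u \<noteq> v \<and> E v u)"

definition legal_coloring :: "nat set \<Rightarrow> (nat \<Rightarrow> nat \<Rightarrow> bool) \<Rightarrow> (nat \<Rightarrow> nat) \<Rightarrow> nat \<Rightarrow> bool" where
  "legal_coloring V E col c \<longleftrightarrow> (\<forall>v\<in>V. col v < c) \<and> (\<forall>u v. E u v \<longrightarrow> col u \<noteq> col v)"

definition compatible :: "nat set \<Rightarrow> (nat \<Rightarrow> nat \<Rightarrow> bool) \<Rightarrow> sat_instance \<Rightarrow> bool" where
  "compatible V E C \<longleftrightarrow> (\<forall>(cl, w) \<in> set C. clause_vars cl \<subseteq> V \<and>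
      (\<forall>u\<in>clause_vars cl. \<forall>v\<in>clause_vars cl. u \<noteq> v \<longrightarrow> E u v))"

(* local input of a node: (own id, number of colors c, own color, neighbour ids,
   the weighted clauses containing its variable) *)
type_synonym linput = "nat \<times> nat \<times> nat \<times> nat set \<times> sat_instance"

(* events in the local history: a random draw, or the messages received in a round
   (indexed by sender id) *)
datatype event = Rand real | Recv "nat \<Rightarrow> bool list"

(* the local state of a node is its full history (input plus all events) *)
type_synonym state = "linput \<times> event list"

(* a distributed randomized algorithm: in each round, every node first draws a random value
   from a distribution depending on its state, then sends a bit-string message to each
   neighbour (a function of its state), then receives the neighbours' messages. *)
record algo =
  coin :: "state \<Rightarrow> real pmf"
  send :: "state \<Rightarrow> nat \<Rightarrow> bool list"
  out  :: "state \<Rightarrow> bool"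

definition init_config :: "nat set \<Rightarrow> (nat \<Rightarrow> nat \<Rightarrow> bool) \<Rightarrow> sat_instance \<Rightarrow> (nat \<Rightarrow> nat) \<Rightarrow> nat
    \<Rightarrow> nat \<Rightarrow> state" where
  "init_config V E C col c v =
     ((v, c, col v, {u. E v u}, filter (\<lambda>(cl, w). v \<in> clause_vars cl) C), [])"

definition drawn :: "nat set \<Rightarrow> (nat \<Rightarrow> state) \<Rightarrow> (nat \<Rightarrow> real) \<Rightarrow> nat \<Rightarrow> state" where
  "drawn V \<sigma> \<rho> v = (if v \<in> V then (fst (\<sigma> v), snd (\<sigma> v) @ [Rand (\<rho> v)]) else \<sigma> v)"

definition deliver :: "algo \<Rightarrow> nat set \<Rightarrow> (nat \<Rightarrow> nat \<Rightarrow> bool) \<Rightarrow> (nat \<Rightarrow> state) \<Rightarrow> nat \<Rightarrow> state" where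
  "deliver A V E \<tau> v = (if v \<in> V then
      (fst (\<tau> v), snd (\<tau> v) @ [Recv (\<lambda>u. if u \<in> V \<and> E u v then send A (\<tau> u) v else [])])
    else \<tau> v)"

definition step :: "algo \<Rightarrow> nat set \<Rightarrow> (nat \<Rightarrow> nat \<Rightarrow> bool) \<Rightarrow> (nat \<Rightarrow> state) \<Rightarrow> (nat \<Rightarrow> state) pmf" where
  "step A V E \<sigma> = map_pmf (\<lambda>\<rho>. deliver A V E (drawn V \<sigma> \<rho>)) (Pi_pmf V 0 (\<lambda>v. coin A (\<sigma> v)))"

fun run :: "algo \<Rightarrow> nat set \<Rightarrow> (nat \<Rightarrow> nat \<Rightarrow> bool) \<Rightarrow> (nat \<Rightarrow> state) \<Rightarrow> nat \<Rightarrow> (nat \<Rightarrow> state) pmf" where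
  "run A V E \<sigma>0 0 = return_pmf \<sigma>0"
| "run A V E \<sigma>0 (Suc r) = bind_pmf (run A V E \<sigma>0 r) (step A V E)"

definition congest_bandwidth :: "algo \<Rightarrow> nat set \<Rightarrow> (nat \<Rightarrow> nat \<Rightarrow> bool) \<Rightarrow> (nat \<Rightarrow> state)
    \<Rightarrow> nat \<Rightarrow> nat \<Rightarrow> bool" where
  "congest_bandwidth A V E \<sigma>0 R B \<longleftrightarrow>
     (\<forall>r<R. \<forall>\<sigma> \<in> set_pmf (run A V E \<sigma>0 r). \<forall>\<rho>.
        (\<forall>v\<in>V. \<rho> v \<in> set_pmf (coin A (\<sigma> v))) \<longrightarrow>
        (\<forall>u v. E u v \<longrightarrow>
           length (send A (drawn V \<sigma> \<rho> u) v) \<le> B * (nat \<lceil>log 2 (real (card V))\<rceil> + 1)))"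

definition output_assignment :: "algo \<Rightarrow> (nat \<Rightarrow> state) \<Rightarrow> nat \<Rightarrow> bool" where
  "output_assignment A \<sigma> v = out A (\<sigma> v)"

end

theory Submission imports Defs begin

text \<open>The algorithm is the randomized greedy rule for Max SAT, executed one colour
  class per round. Score a clause 1 if it is already satisfied by the decided variables, 0 if it is
  already falsified and 1/2 otherwise. In round \<open>r\<close> every node of colour \<open>r\<close> computes the gains
  \<open>t\<close> and \<open>f\<close> of this score over its clauses when its variable is fixed to true or to false, and
  sets it true with probability \<open>t / (t + f)\<close>. Nodes of one colour share no clause, so they act
  independently and each knows every decision its clauses depend on.

  Fix any assignment \<open>a0\<close>. The score of the decided part plus the weight satisfied by \<open>a0\<close>
  overwritten with the decisions does not decrease in expectation: deviating from \<open>a0\<close> at a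
  variable loses at most twice the gain of following it, and the chosen probabilities make the
  expected gain at least twice the expected loss. This quantity starts at no less than
  \<open>3/2\<close> times the weight of \<open>a0\<close> and ends at twice the weight of the output. Every message is
  a single decision bit, and \<open>c\<close> rounds suffice.\<close>

lemma integrable_measure_pmf_bounded:
  fixes f :: "'a \<Rightarrow> real"
  assumes "\<And>x. \<bar>f x\<bar> \<le> B"
  shows "integrable (measure_pmf M) f"
  using assms by (intro measure_pmf.integrable_const_bound[where B = B]) auto

lemma expectation_bind_pmf_bounded:
  fixes f :: "'b \<Rightarrow> real"
  assumes "\<And>x. \<bar>f x\<bar> \<le> B"
  shows "measure_pmf.expectation (M \<bind> N) f
           = measure_pmf.expectation M (\<lambda>x. measure_pmf.expectation (N x) f)"
  unfolding measure_pmf_bind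
  by (rule integral_bind[where K = "count_space UNIV" and B = B and B' = 1])
     (use assms in \<open>auto simp: measure_pmf_in_subprob_algebra\<close>)

definition weighted_sum :: "(clause \<Rightarrow> real) \<Rightarrow> sat_instance \<Rightarrow> real" where
  "weighted_sum f L = sum_list (map (\<lambda>(cl, w). w * f cl) L)"

lemma sat_weight_eq_weighted_sum: "sat_weight C a = weighted_sum (\<lambda>cl. of_bool (sat_clause a cl)) C"
  unfolding sat_weight_def weighted_sum_def by (intro arg_cong[where f = sum_list] map_cong) auto

lemma weighted_sum_cong:
  "(\<And>cl w. (cl, w) \<in> set L \<Longrightarrow> f cl = g cl) \<Longrightarrow> weighted_sum f L = weighted_sum g L"
  unfolding weighted_sum_def by (intro arg_cong[where f = sum_list] map_cong) auto

lemma weighted_sum_zero [simp]: "weighted_sum (\<lambda>cl. 0) L = 0"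
  unfolding weighted_sum_def by (induction L) auto

lemma weighted_sum_add: "weighted_sum (\<lambda>cl. f cl + g cl) L = weighted_sum f L + weighted_sum g L"
  unfolding weighted_sum_def by (induction L) (auto simp: algebra_simps)

lemma weighted_sum_diff: "weighted_sum (\<lambda>cl. f cl - g cl) L = weighted_sum f L - weighted_sum g L"
  unfolding weighted_sum_def by (induction L) (auto simp: algebra_simps)

lemma weighted_sum_cmult: "weighted_sum (\<lambda>cl. a * f cl) L = a * weighted_sum f L"
  unfolding weighted_sum_def by (induction L) (auto simp: algebra_simps)

lemma weighted_sum_sum:
  "weighted_sum (\<lambda>cl. \<Sum>v\<in>S. g v cl) L = (\<Sum>v\<in>S. weighted_sum (g v) L)"
  unfolding weighted_sum_def by (induction L) (auto simp: sum.distrib sum_distrib_left)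

lemma weighted_sum_filter:
  "weighted_sum f (filter (\<lambda>(cl, w). P cl) L) = weighted_sum (\<lambda>cl. of_bool (P cl) * f cl) L"
  unfolding weighted_sum_def by (induction L) auto

lemma weighted_sum_mono:
  assumes "\<forall>(cl, w) \<in> set L. 0 \<le> w" and "\<And>cl w. (cl, w) \<in> set L \<Longrightarrow> f cl \<le> g cl"
  shows "weighted_sum f L \<le> weighted_sum g L"
  unfolding weighted_sum_def using assms by (intro sum_list_mono) (auto intro: mult_left_mono)

type_synonym partial_assignment = "nat \<Rightarrow> bool option"

definition partially_satisfied :: "partial_assignment \<Rightarrow> clause \<Rightarrow> bool" where
  "partially_satisfied pa cl \<longleftrightarrow> (\<exists>(x, p) \<in> set cl. pa x = Some p)"

definition partially_falsified :: "partial_assignment \<Rightarrow> clause \<Rightarrow> bool" where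
  "partially_falsified pa cl \<longleftrightarrow> (\<forall>(x, p) \<in> set cl. pa x = Some (\<not> p))"

definition clause_potential :: "partial_assignment \<Rightarrow> clause \<Rightarrow> real" where
  "clause_potential pa cl =
     (of_bool (partially_satisfied pa cl) + of_bool (\<not> partially_falsified pa cl)) / 2"

lemma partially_satisfied_simps [simp]:
  "partially_satisfied pa [] = False"
  "partially_satisfied pa ((x, p) # cl) \<longleftrightarrow> pa x = Some p \<or> partially_satisfied pa cl"
  by (simp_all add: partially_satisfied_def)

lemma partially_falsified_simps [simp]:
  "partially_falsified pa [] = True"
  "partially_falsified pa ((x, p) # cl) \<longleftrightarrow> pa x = Some (\<not> p) \<and> partially_falsified pa cl"
  by (simp_all add: partially_falsified_def)

lemma sat_clause_simps [simp]:
  "sat_clause a [] = False"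
  "sat_clause a ((x, p) # cl) \<longleftrightarrow> a x = p \<or> sat_clause a cl"
  by (simp_all add: sat_clause_def)

lemma clause_varsI: "(x, p) \<in> set cl \<Longrightarrow> x \<in> clause_vars cl"
  unfolding clause_vars_def by force

lemma sat_clause_cong:
  assumes "\<And>x. x \<in> clause_vars cl \<Longrightarrow> a x = a' x"
  shows "sat_clause a cl = sat_clause a' cl"
proof -
  have "\<And>x p. (x, p) \<in> set cl \<Longrightarrow> a x = a' x" using assms clause_varsI by blast
  then show ?thesis unfolding sat_clause_def by (intro bex_cong refl) auto
qed

lemma clause_potential_cong:
  assumes "\<And>x. x \<in> clause_vars cl \<Longrightarrow> pa x = pa' x"
  shows "clause_potential pa cl = clause_potential pa' cl"
proof -
  have "\<And>x p. (x, p) \<in> set cl \<Longrightarrow> pa x = pa' x" using assms clause_varsI by blast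
  then have "partially_satisfied pa cl = partially_satisfied pa' cl"
       "partially_falsified pa cl = partially_falsified pa' cl"
    unfolding partially_satisfied_def partially_falsified_def by (intro bex_cong ball_cong refl; auto)+
  then show ?thesis by (simp add: clause_potential_def)
qed

lemma clause_potential_total: "clause_potential (\<lambda>x. Some (a x)) cl = of_bool (sat_clause a cl)"
proof -
  have "partially_satisfied (\<lambda>x. Some (a x)) cl = sat_clause a cl"
       "partially_falsified (\<lambda>x. Some (a x)) cl = (\<not> sat_clause a cl)"
    by (induction cl) auto
  then show ?thesis by (simp add: clause_potential_def)
qed

lemma clause_potential_empty: "clause_potential (\<lambda>_. None) cl = of_bool (cl \<noteq> []) / 2"
proof -
  have "\<not> partially_satisfied (\<lambda>_. None) cl" by (induction cl) auto
  moreover have "partially_falsified (\<lambda>_. None) cl \<longleftrightarrow> cl = []" by (cases cl) auto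
  ultimately show ?thesis by (simp add: clause_potential_def)
qed

lemma clause_potential_bounds: "0 \<le> clause_potential pa cl \<and> clause_potential pa cl \<le> 1"
  by (simp add: clause_potential_def)

lemma partially_satisfied_update:
  "pa v = None \<Longrightarrow>
     partially_satisfied (pa(v := Some b)) cl \<longleftrightarrow> partially_satisfied pa cl \<or> (v, b) \<in> set cl"
proof (induction cl)
  case (Cons l cl)
  obtain x p where "l = (x, p)" by (cases l)
  with Cons show ?case by (cases "x = v") auto
qed simp

lemma partially_falsified_update:
  "partially_falsified (pa(v := Some b)) cl \<longleftrightarrow>
     (\<forall>(x, p) \<in> set cl. x \<noteq> v \<longrightarrow> pa x = Some (\<not> p)) \<and> (v, b) \<notin> set cl"
proof (induction cl)
  case (Cons l cl)
  obtain x p where "l = (x, p)" by (cases l)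
  with Cons show ?case by (cases "x = v") auto
qed simp

lemma partially_falsified_unassigned:
  "pa v = None \<Longrightarrow>
     partially_falsified pa cl \<longleftrightarrow>
       (\<forall>(x, p) \<in> set cl. x \<noteq> v \<longrightarrow> pa x = Some (\<not> p)) \<and> (v, b) \<notin> set cl \<and> (v, \<not> b) \<notin> set cl"
proof (induction cl)
  case (Cons l cl)
  obtain x p where "l = (x, p)" by (cases l)
  with Cons show ?case by (cases "x = v"; cases b) auto
qed simp

lemma sat_clause_update:
  "sat_clause (a(v := b)) cl \<longleftrightarrow> (\<exists>(x, p) \<in> set cl. x \<noteq> v \<and> a x = p) \<or> (v, b) \<in> set cl"
proof (induction cl)
  case (Cons l cl)
  obtain x p where "l = (x, p)" by (cases l)
  with Cons show ?case by (cases "x = v") auto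
qed simp

lemma clause_potential_midpoint:
  assumes unassigned: "pa v = None"
  shows "2 * clause_potential pa cl
           \<le> clause_potential (pa(v := Some True)) cl + clause_potential (pa(v := Some False)) cl"
proof -
  define rest_falsified where "rest_falsified = (\<forall>(x, p) \<in> set cl. x \<noteq> v \<longrightarrow> pa x = Some (\<not> p))"
  have "\<not> partially_satisfied pa cl" if rest_falsified
    using that unassigned unfolding rest_falsified_def partially_satisfied_def by fastforce
  then show ?thesis
    unfolding clause_potential_def partially_satisfied_update[of pa v, OF unassigned]
      partially_falsified_update partially_falsified_unassigned[of pa v, OF unassigned, of _ True]
      rest_falsified_def[symmetric]
    by (cases "(v, True) \<in> set cl"; cases "(v, False) \<in> set cl";
        cases "partially_satisfied pa cl"; cases rest_falsified) simp_all
qed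

text \<open>Flipping an assignment that extends the partial one at an unassigned variable can
  unsatisfy only clauses that are still open and contain the literal it satisfies; fixing that
  literal instead raises their potential by at least 1/2.\<close>

lemma sat_loss_le_potential_gain:
  assumes unassigned: "pa v = None" and extends: "\<And>x y. pa x = Some y \<Longrightarrow> a x = y"
  shows "of_bool (sat_clause a cl) - of_bool (sat_clause (a(v := \<not> a v)) cl)
           \<le> 2 * (clause_potential (pa(v := Some (a v))) cl - clause_potential pa cl)"
proof -
  define b where "b = a v"
  define rest_falsified where "rest_falsified = (\<forall>(x, p) \<in> set cl. x \<noteq> v \<longrightarrow> pa x = Some (\<not> p))"
  define rest_satisfied where "rest_satisfied = (\<exists>(x, p) \<in> set cl. x \<noteq> v \<and> a x = p)"
  have sat_rest: "rest_satisfied" if sat: "partially_satisfied pa cl"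
  proof -
    obtain x p where "(x, p) \<in> set cl" "pa x = Some p"
      using sat unfolding partially_satisfied_def by blast
    moreover from this(2) unassigned extends have "x \<noteq> v" "a x = p" by auto
    ultimately show ?thesis unfolding rest_satisfied_def by blast
  qed
  have falsified_rest: "\<not> rest_satisfied" if rest_falsified
  proof
    assume rest_satisfied
    then obtain x p where "(x, p) \<in> set cl" "x \<noteq> v" "a x = p"
      unfolding rest_satisfied_def by blast
    moreover from this \<open>rest_falsified\<close> have "pa x = Some (\<not> p)"
      unfolding rest_falsified_def by blast
    ultimately show False using extends by fastforce
  qed
  have "a(v := b) = a" by (simp add: b_def)
  then have "sat_clause a cl \<longleftrightarrow> rest_satisfied \<or> (v, b) \<in> set cl"
    using sat_clause_update[of a v b cl] by (simp add: rest_satisfied_def)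
  then show ?thesis
    unfolding clause_potential_def partially_satisfied_update[of pa v, OF unassigned]
      partially_falsified_update partially_falsified_unassigned[of pa v, OF unassigned, of _ b]
      sat_clause_update b_def[symmetric] rest_falsified_def[symmetric] rest_satisfied_def[symmetric]
    using sat_rest falsified_rest
    by (cases "(v, b) \<in> set cl"; cases "(v, \<not> b) \<in> set cl"; cases "partially_satisfied pa cl";
        cases rest_falsified; cases rest_satisfied) simp_all
qed

definition greedy_prob :: "real \<Rightarrow> real \<Rightarrow> real" where
  "greedy_prob t f = (if f \<le> 0 then 1 else if t \<le> 0 then 0 else t / (t + f))"

lemma greedy_prob_bounds: "0 \<le> greedy_prob t f \<and> greedy_prob t f \<le> 1"
  by (simp add: greedy_prob_def)

text \<open>In the interior case both inequalities say \<open>2 t f \<le> t\<^sup>2 + f\<^sup>2\<close>.\<close>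

lemma greedy_prob_gain_ge:
  assumes "0 \<le> t + f"
  shows "2 * greedy_prob t f * f \<le> greedy_prob t f * t + (1 - greedy_prob t f) * f"
    and "2 * (1 - greedy_prob t f) * t \<le> greedy_prob t f * t + (1 - greedy_prob t f) * f"
proof -
  have "2 * t * f / (t + f) \<le> (t * t + f * f) / (t + f)"
    if "0 < t + f"
    using that sum_squares_ge_zero[of "t - f" 0] by (intro divide_right_mono) (auto simp: algebra_simps)
  then show "2 * greedy_prob t f * f \<le> greedy_prob t f * t + (1 - greedy_prob t f) * f"
       and "2 * (1 - greedy_prob t f) * t \<le> greedy_prob t f * t + (1 - greedy_prob t f) * f"
    using assms by (auto simp: greedy_prob_def field_simps)
qed

definition potential_gain :: "partial_assignment \<Rightarrow> nat \<Rightarrow> bool \<Rightarrow> sat_instance \<Rightarrow> real" where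
  "potential_gain pa v b L =
     weighted_sum (\<lambda>cl. clause_potential (pa(v := Some b)) cl - clause_potential pa cl) L"

lemma potential_gain_cong:
  assumes "\<And>cl w x. (cl, w) \<in> set L \<Longrightarrow> x \<in> clause_vars cl \<Longrightarrow> pa x = pa' x"
  shows "potential_gain pa v b L = potential_gain pa' v b L"
  unfolding potential_gain_def using assms
  by (intro weighted_sum_cong arg_cong2[where f = "(-)"] clause_potential_cong) auto

definition flip_loss :: "(nat \<Rightarrow> bool) \<Rightarrow> nat \<Rightarrow> sat_instance \<Rightarrow> real" where
  "flip_loss a v L =
     weighted_sum (\<lambda>cl. of_bool (sat_clause a cl) - of_bool (sat_clause (a(v := \<not> a v)) cl)) L"

definition clause_value :: "partial_assignment \<Rightarrow> (nat \<Rightarrow> bool) \<Rightarrow> clause \<Rightarrow> real" where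
  "clause_value pa a cl = clause_potential pa cl + of_bool (sat_clause a cl)"

lemma weighted_clause_value_update:
  "weighted_sum (clause_value (pa(v := Some b)) (a(v := b))) L
     = weighted_sum (clause_value pa a) L + potential_gain pa v b L
       - of_bool (b \<noteq> a v) * flip_loss a v L"
proof -
  let ?loss = "\<lambda>cl. of_bool (sat_clause a cl) - of_bool (sat_clause (a(v := \<not> a v)) cl)"
  let ?gain = "\<lambda>cl. clause_potential (pa(v := Some b)) cl - clause_potential pa cl"
  have "b \<noteq> a v \<Longrightarrow> b = (\<not> a v)" by auto
  then have "clause_value (pa(v := Some b)) (a(v := b)) cl
      = clause_value pa a cl + ?gain cl - of_bool (b \<noteq> a v) * ?loss cl" for cl
    by (cases "b = a v") (auto simp: clause_value_def)
  then have "weighted_sum (clause_value (pa(v := Some b)) (a(v := b))) L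
      = weighted_sum (\<lambda>cl. clause_value pa a cl + ?gain cl - of_bool (b \<noteq> a v) * ?loss cl) L"
    by (intro weighted_sum_cong)
  also have "\<dots> = weighted_sum (clause_value pa a) L + weighted_sum ?gain L
      - of_bool (b \<noteq> a v) * weighted_sum ?loss L"
    unfolding weighted_sum_diff weighted_sum_add weighted_sum_cmult ..
  finally show ?thesis unfolding potential_gain_def flip_loss_def .
qed

lemma weighted_clause_value_greedy_step:
  assumes nonneg: "\<forall>(cl, w) \<in> set L. 0 \<le> w"
    and unassigned: "pa v = None" and extends: "\<And>x y. pa x = Some y \<Longrightarrow> a x = y"
  defines "p \<equiv> greedy_prob (potential_gain pa v True L) (potential_gain pa v False L)"
  shows "weighted_sum (clause_value pa a) L
           \<le> p * weighted_sum (clause_value (pa(v := Some True)) (a(v := True))) L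
             + (1 - p) * weighted_sum (clause_value (pa(v := Some False)) (a(v := False))) L"
proof -
  have gains_nonneg: "0 \<le> potential_gain pa v True L + potential_gain pa v False L"
  proof -
    have "weighted_sum (\<lambda>cl. 0) L \<le> weighted_sum (\<lambda>cl. clause_potential (pa(v := Some True)) cl
        - clause_potential pa cl + (clause_potential (pa(v := Some False)) cl - clause_potential pa cl)) L"
      using nonneg clause_potential_midpoint[of pa v, OF unassigned]
      by (intro weighted_sum_mono) (auto simp: algebra_simps)
    then show ?thesis unfolding potential_gain_def weighted_sum_add[symmetric] by simp
  qed
  have flip_loss_le: "flip_loss a v L \<le> 2 * potential_gain pa v (a v) L"
    unfolding flip_loss_def potential_gain_def weighted_sum_cmult[symmetric]
    using nonneg sat_loss_le_potential_gain[of pa v a, OF unassigned extends]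
    by (intro weighted_sum_mono) auto
  have p_bounds: "0 \<le> p" "p \<le> 1" using greedy_prob_bounds unfolding p_def by auto
  show ?thesis
  proof (cases "a v")
    case True
    have "(1 - p) * flip_loss a v L \<le> 2 * (1 - p) * potential_gain pa v True L"
      using mult_left_mono[OF flip_loss_le, of "1 - p"] p_bounds True by (simp add: algebra_simps)
    with greedy_prob_gain_ge(2)[OF gains_nonneg] show ?thesis
      unfolding weighted_clause_value_update p_def[symmetric] using True
      by (simp add: algebra_simps)
  next
    case False
    have "p * flip_loss a v L \<le> 2 * p * potential_gain pa v False L"
      using mult_left_mono[OF flip_loss_le, of p] p_bounds False by (simp add: algebra_simps)
    with greedy_prob_gain_ge(1)[OF gains_nonneg] show ?thesis
      unfolding weighted_clause_value_update p_def[symmetric] using False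
      by (simp add: algebra_simps)
  qed
qed

definition last_inbox :: "event list \<Rightarrow> nat \<Rightarrow> bool list" where
  "last_inbox evs =
     (if evs = [] then (\<lambda>_. []) else (case last evs of Recv m \<Rightarrow> m | Rand _ \<Rightarrow> (\<lambda>_. [])))"

definition known_values :: "nat \<Rightarrow> event list \<Rightarrow> partial_assignment" where
  "known_values v evs u =
     (if u = v then None else (case last_inbox evs u of [b] \<Rightarrow> Some b | _ \<Rightarrow> None))"

text \<open>Every round appends a draw and an inbox to each history, so a node of colour \<open>cv\<close> decides
  by its draw in round \<open>cv\<close>, which sits at position \<open>2 * cv\<close> of its history (\<open>Rand 1\<close> meaning
  true); from that round on it broadcasts the decision as a single bit.\<close>

definition greedy_coin :: "state \<Rightarrow> real pmf" where
  "greedy_coin s = (case s of ((v, _, cv, _, L), evs) \<Rightarrow>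
     if length evs div 2 = cv
     then map_pmf of_bool (bernoulli_pmf (greedy_prob
            (potential_gain (known_values v evs) v True L) (potential_gain (known_values v evs) v False L)))
     else return_pmf 0)"

definition greedy_send :: "state \<Rightarrow> nat \<Rightarrow> bool list" where
  "greedy_send s u = (case s of ((_, _, cv, _, _), evs) \<Rightarrow>
     if 2 * cv < length evs then [evs ! (2 * cv) = Rand 1] else [])"

definition greedy_out :: "state \<Rightarrow> bool" where
  "greedy_out s = (case s of ((_, _, cv, _, _), evs) \<Rightarrow> evs ! (2 * cv) = Rand 1)"

definition greedy_algo :: algo where
  "greedy_algo = \<lparr>coin = greedy_coin, send = greedy_send, out = greedy_out\<rparr>"

lemma greedy_algo_bandwidth: "congest_bandwidth greedy_algo V E \<sigma>0 R 1"
proof -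
  have one_bit: "length (send greedy_algo s u) \<le> 1" for s u
    by (cases s) (auto simp: greedy_algo_def greedy_send_def split: prod.splits)
  show ?thesis unfolding congest_bandwidth_def by (auto intro: order_trans[OF one_bit])
qed

locale colored_instance =
  fixes V :: "nat set" and E :: "nat \<Rightarrow> nat \<Rightarrow> bool" and C :: sat_instance
    and col :: "nat \<Rightarrow> nat" and c :: nat
  assumes graph: "graph V E" and max2sat: "weighted_max2sat C" and compatible: "compatible V E C"
    and coloring: "legal_coloring V E col c"
begin

lemma finite_V: "finite V"
  using graph by (simp add: graph_def)

lemma edge_sym: "E u v \<Longrightarrow> E v u \<and> u \<in> V \<and> v \<in> V"
  using graph by (simp add: graph_def)

lemma edge_colors_differ: "E u v \<Longrightarrow> col u \<noteq> col v"
  using coloring by (simp add: legal_coloring_def)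

lemma color_less: "v \<in> V \<Longrightarrow> col v < c"
  using coloring by (simp add: legal_coloring_def)

lemma clause_vars_adjacent:
  "(cl, w) \<in> set C \<Longrightarrow> u \<in> clause_vars cl \<Longrightarrow> v \<in> clause_vars cl \<Longrightarrow> u \<noteq> v \<Longrightarrow> E u v"
  using compatible unfolding compatible_def by fastforce

lemma clause_vars_in_V: "(cl, w) \<in> set C \<Longrightarrow> u \<in> clause_vars cl \<Longrightarrow> u \<in> V"
  using compatible unfolding compatible_def by fastforce

lemma weights_nonneg: "\<forall>(cl, w) \<in> set C. 0 \<le> w"
  using max2sat unfolding weighted_max2sat_def by fastforce

definition clauses_of :: "nat \<Rightarrow> sat_instance" where
  "clauses_of v = filter (\<lambda>(cl, w). v \<in> clause_vars cl) C"

lemma init_config_eq: "init_config V E C col c v = ((v, c, col v, {u. E v u}, clauses_of v), [])"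
  by (simp add: init_config_def clauses_of_def)

text \<open>A run is determined by the decision vector \<open>d\<close>; after \<open>r\<close> rounds only the decisions of
  colours below \<open>r\<close> have been made and are visible.\<close>

fun history :: "nat \<Rightarrow> (nat \<Rightarrow> bool) \<Rightarrow> nat \<Rightarrow> event list" where
  "history 0 d v = []"
| "history (Suc r) d v = history r d v @ [Rand (if col v = r then of_bool (d v) else 0),
     Recv (\<lambda>u. if u \<in> V \<and> E u v \<and> col u \<le> r then [d u] else [])]"

definition config :: "nat \<Rightarrow> (nat \<Rightarrow> bool) \<Rightarrow> nat \<Rightarrow> state" where
  "config r d v =
     (if v \<in> V then (fst (init_config V E C col c v), history r d v) else init_config V E C col c v)"

definition decided_part :: "nat \<Rightarrow> (nat \<Rightarrow> bool) \<Rightarrow> partial_assignment" where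
  "decided_part r d x = (if x \<in> V \<and> col x < r then Some (d x) else None)"

definition decide :: "nat \<Rightarrow> (nat \<Rightarrow> bool) \<Rightarrow> (nat \<Rightarrow> real) \<Rightarrow> nat \<Rightarrow> bool" where
  "decide r d \<rho> v = (if v \<in> V \<and> col v = r then \<rho> v = 1 else d v)"

definition coin_prob :: "nat \<Rightarrow> (nat \<Rightarrow> bool) \<Rightarrow> nat \<Rightarrow> real" where
  "coin_prob r d v = greedy_prob (potential_gain (decided_part r d) v True (clauses_of v))
                                 (potential_gain (decided_part r d) v False (clauses_of v))"

definition draws :: "nat \<Rightarrow> (nat \<Rightarrow> bool) \<Rightarrow> (nat \<Rightarrow> real) pmf" where
  "draws r d = Pi_pmf V 0 (\<lambda>v. coin greedy_algo (config r d v))"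

fun decisions :: "nat \<Rightarrow> (nat \<Rightarrow> bool) pmf" where
  "decisions 0 = return_pmf (\<lambda>_. False)"
| "decisions (Suc r) = decisions r \<bind> (\<lambda>d. map_pmf (decide r d) (draws r d))"

lemma length_history [simp]: "length (history r d v) = 2 * r"
  by (induction r) auto

lemma history_nth_draw:
  "j < r \<Longrightarrow> history r d v ! (2 * j) = Rand (if col v = j then of_bool (d v) else 0)"
  by (induction r) (auto simp: nth_append less_Suc_eq)

lemma history_cong: "(\<And>x. col x < r \<Longrightarrow> d x = d' x) \<Longrightarrow> history r d v = history r d' v"
  by (induction r) (auto intro!: ext)

lemma known_values_history:
  assumes "(cl, w) \<in> set (clauses_of v)" "x \<in> clause_vars cl" and "r \<le> col v"
  shows "known_values v (history r d v) x = decided_part r d x"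
proof (cases "x = v")
  case False
  have "(cl, w) \<in> set C" "v \<in> clause_vars cl" using assms(1) by (auto simp: clauses_of_def)
  then have "E x v" "x \<in> V" using clause_vars_adjacent[OF _ assms(2) _ False] edge_sym by auto
  then show ?thesis using False
    by (cases r) (auto simp: known_values_def decided_part_def last_inbox_def)
qed (use assms(3) in \<open>simp add: known_values_def decided_part_def\<close>)

lemma coin_config:
  assumes "v \<in> V"
  shows "coin greedy_algo (config r d v) =
           (if col v = r then map_pmf of_bool (bernoulli_pmf (coin_prob r d v)) else return_pmf 0)"
proof -
  have "potential_gain (known_values v (history r d v)) v b (clauses_of v)
          = potential_gain (decided_part r d) v b (clauses_of v)" if "col v = r" for b
    using that by (intro potential_gain_cong known_values_history) auto
  then show ?thesis using assms
    by (simp add: config_def init_config_eq greedy_algo_def greedy_coin_def coin_prob_def)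
qed

lemma draw_value:
  assumes "\<rho> \<in> set_pmf (draws r d)" "v \<in> V"
  shows "\<rho> v = (if col v = r then of_bool (decide r d \<rho> v) else 0)"
proof -
  have "\<rho> v \<in> set_pmf (coin greedy_algo (config r d v))"
    using assms finite_V by (auto simp: draws_def set_Pi_pmf PiE_dflt_def)
  then show ?thesis using assms(2) by (auto simp: coin_config decide_def split: if_splits)
qed

lemma send_drawn:
  assumes "\<rho> \<in> set_pmf (draws r d)" "u \<in> V"
  shows "send greedy_algo (drawn V (config r d) \<rho> u) v
           = (if col u \<le> r then [decide r d \<rho> u] else [])"
proof -
  have state: "drawn V (config r d) \<rho> u
      = ((u, c, col u, {x. E u x}, clauses_of u), history r d u @ [Rand (\<rho> u)])"
    using assms(2) by (simp add: drawn_def config_def init_config_eq)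
  consider "col u < r" | "col u = r" | "r < col u" by linarith
  then show ?thesis
  proof cases
    case 1
    then show ?thesis using state history_nth_draw[OF 1, of d u]
      by (simp add: greedy_algo_def greedy_send_def nth_append decide_def)
  next
    case 2
    then show ?thesis using state draw_value[OF assms]
      by (simp add: greedy_algo_def greedy_send_def nth_append)
  qed (use state in \<open>simp add: greedy_algo_def greedy_send_def\<close>)
qed

lemma step_config:
  assumes "\<rho> \<in> set_pmf (draws r d)"
  shows "deliver greedy_algo V E (drawn V (config r d) \<rho>) = config (Suc r) (decide r d \<rho>)"
proof
  fix v
  show "deliver greedy_algo V E (drawn V (config r d) \<rho>) v = config (Suc r) (decide r d \<rho>) v"
  proof (cases "v \<in> V")
    case True
    have "history r (decide r d \<rho>) v = history r d v"
      by (rule history_cong) (auto simp: decide_def)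
    moreover have "(\<lambda>u. if u \<in> V \<and> E u v then send greedy_algo (drawn V (config r d) \<rho> u) v else [])
        = (\<lambda>u. if u \<in> V \<and> E u v \<and> col u \<le> r then [decide r d \<rho> u] else [])"
      using send_drawn[OF assms] by auto
    ultimately show ?thesis using True draw_value[OF assms True]
      by (simp add: deliver_def drawn_def config_def)
  qed (simp add: deliver_def drawn_def config_def)
qed

lemma run_eq_decisions:
  "run greedy_algo V E (init_config V E C col c) r = map_pmf (config r) (decisions r)"
proof (induction r)
  case 0
  have "init_config V E C col c = config 0 (\<lambda>_. False)"
    by (auto simp: config_def init_config_def)
  then show ?case by simp
next
  case (Suc r)
  have "step greedy_algo V E (config r d) = map_pmf (config (Suc r)) (map_pmf (decide r d) (draws r d))" for d
    unfolding step_def pmf.map_comp draws_def[symmetric]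
    by (rule map_pmf_cong[OF refl]) (simp add: step_config)
  then show ?case by (simp add: Suc bind_map_pmf map_bind_pmf)
qed

definition hybrid :: "(nat \<Rightarrow> bool) \<Rightarrow> nat \<Rightarrow> (nat \<Rightarrow> bool) \<Rightarrow> nat \<Rightarrow> bool" where
  "hybrid a0 r d x = (if x \<in> V \<and> col x < r then d x else a0 x)"

definition potential :: "(nat \<Rightarrow> bool) \<Rightarrow> nat \<Rightarrow> (nat \<Rightarrow> bool) \<Rightarrow> real" where
  "potential a0 r d = weighted_sum (clause_value (decided_part r d) (hybrid a0 r d)) C"

definition local_value :: "(nat \<Rightarrow> bool) \<Rightarrow> nat \<Rightarrow> (nat \<Rightarrow> bool) \<Rightarrow> nat \<Rightarrow> bool \<Rightarrow> real" where
  "local_value a0 r d v b =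
     weighted_sum (clause_value ((decided_part r d)(v := Some b)) ((hybrid a0 r d)(v := b))) (clauses_of v)"

definition color_class :: "nat \<Rightarrow> nat set" where
  "color_class r = {v \<in> V. col v = r}"

definition avoiding_color :: "nat \<Rightarrow> sat_instance" where
  "avoiding_color r = filter (\<lambda>(cl, w). \<forall>x \<in> clause_vars cl. col x \<noteq> r) C"

text \<open>The variables of a clause are pairwise adjacent, so a clause meets each colour class in at
  most one variable.\<close>

lemma weighted_sum_color_split:
  "weighted_sum f C
     = weighted_sum f (avoiding_color r) + (\<Sum>v\<in>color_class r. weighted_sum f (clauses_of v))"
proof -
  have one: "of_bool (\<forall>x \<in> clause_vars cl. col x \<noteq> r)
      + (\<Sum>v\<in>color_class r. of_bool (v \<in> clause_vars cl)) = (1::real)"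
    if cl: "(cl, w) \<in> set C" for cl w
  proof (cases "\<forall>x \<in> clause_vars cl. col x \<noteq> r")
    case True
    then have "\<forall>v\<in>color_class r. v \<notin> clause_vars cl" by (auto simp: color_class_def)
    with True show ?thesis by simp
  next
    case False
    then obtain x where x: "x \<in> clause_vars cl" "col x = r" by blast
    have unique: "v = x" if "v \<in> color_class r" "v \<in> clause_vars cl" for v
    proof (rule ccontr)
      assume "v \<noteq> x"
      then have "col v \<noteq> col x"
        using clause_vars_adjacent[OF cl that(2) x(1)] edge_colors_differ by blast
      with that(1) x(2) show False by (simp add: color_class_def)
    qed
    have "x \<in> color_class r" using x clause_vars_in_V[OF cl] by (simp add: color_class_def)
    with unique x(1) have "color_class r \<inter> {v. v \<in> clause_vars cl} = {x}" by blast
    moreover have "finite (color_class r)" using finite_V by (simp add: color_class_def)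
    ultimately have "(\<Sum>v\<in>color_class r. of_bool (v \<in> clause_vars cl)) = (1::real)" by simp
    with False show ?thesis by simp
  qed
  have "weighted_sum f C = weighted_sum (\<lambda>cl. (of_bool (\<forall>x \<in> clause_vars cl. col x \<noteq> r)
      + (\<Sum>v\<in>color_class r. of_bool (v \<in> clause_vars cl))) * f cl) C"
    using one by (intro weighted_sum_cong) auto
  then show ?thesis
    by (simp add: avoiding_color_def clauses_of_def weighted_sum_filter distrib_right
        sum_distrib_right weighted_sum_add weighted_sum_sum)
qed

lemma clause_value_decide_avoiding:
  assumes "(cl, w) \<in> set (avoiding_color r)"
  shows "clause_value (decided_part (Suc r) (decide r d \<rho>)) (hybrid a0 (Suc r) (decide r d \<rho>)) cl
           = clause_value (decided_part r d) (hybrid a0 r d) cl"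
proof -
  have "col x \<noteq> r" if "x \<in> clause_vars cl" for x
    using assms that by (auto simp: avoiding_color_def)
  then show ?thesis unfolding clause_value_def
    by (intro arg_cong2[where f = "(+)"] arg_cong[where f = of_bool] clause_potential_cong sat_clause_cong)
       (auto simp: decided_part_def hybrid_def decide_def less_Suc_eq)
qed

lemma clause_value_decide_local:
  assumes v: "v \<in> color_class r" and cl: "(cl, w) \<in> set (clauses_of v)"
  shows "clause_value (decided_part (Suc r) (decide r d \<rho>)) (hybrid a0 (Suc r) (decide r d \<rho>)) cl
           = clause_value ((decided_part r d)(v := Some (decide r d \<rho> v)))
                          ((hybrid a0 r d)(v := decide r d \<rho> v)) cl"
proof -
  have "(cl, w) \<in> set C" "v \<in> clause_vars cl" using cl by (auto simp: clauses_of_def)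
  then have "col x \<noteq> r" if "x \<in> clause_vars cl" "x \<noteq> v" for x
    using v that clause_vars_adjacent edge_colors_differ by (fastforce simp: color_class_def)
  then show ?thesis using v unfolding clause_value_def
    by (intro arg_cong2[where f = "(+)"] arg_cong[where f = of_bool] clause_potential_cong sat_clause_cong)
       (auto simp: decided_part_def hybrid_def decide_def less_Suc_eq color_class_def)
qed

lemma potential_decide:
  "potential a0 (Suc r) (decide r d \<rho>)
     = weighted_sum (clause_value (decided_part r d) (hybrid a0 r d)) (avoiding_color r)
       + (\<Sum>v\<in>color_class r. local_value a0 r d v (decide r d \<rho> v))"
  unfolding potential_def weighted_sum_color_split[of _ r] local_value_def
  by (intro arg_cong2[where f = "(+)"] sum.cong refl weighted_sum_cong
        clause_value_decide_avoiding clause_value_decide_local)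

lemma decide_distribution:
  assumes "v \<in> color_class r"
  shows "map_pmf (\<lambda>\<rho>. decide r d \<rho> v) (draws r d) = bernoulli_pmf (coin_prob r d v)"
proof -
  have "map_pmf (\<lambda>\<rho>. decide r d \<rho> v) (draws r d)
      = map_pmf (\<lambda>x. x = 1) (map_pmf (\<lambda>\<rho>. \<rho> v) (draws r d))"
    using assms by (simp add: pmf.map_comp decide_def color_class_def o_def)
  also have "map_pmf (\<lambda>\<rho>. \<rho> v) (draws r d) = map_pmf of_bool (bernoulli_pmf (coin_prob r d v))"
    unfolding draws_def using assms finite_V by (simp add: Pi_pmf_component coin_config color_class_def)
  finally show ?thesis by (simp add: pmf.map_comp o_def)
qed

lemma local_value_greedy:
  assumes "v \<in> color_class r"
  shows "weighted_sum (clause_value (decided_part r d) (hybrid a0 r d)) (clauses_of v)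
           \<le> coin_prob r d v * local_value a0 r d v True
             + (1 - coin_prob r d v) * local_value a0 r d v False"
  unfolding coin_prob_def local_value_def
proof (rule weighted_clause_value_greedy_step)
  show "\<forall>(cl, w) \<in> set (clauses_of v). 0 \<le> w" using weights_nonneg by (auto simp: clauses_of_def)
  show "decided_part r d v = None" using assms by (simp add: decided_part_def color_class_def)
qed (auto simp: decided_part_def hybrid_def split: if_splits)

lemma expected_local_value:
  assumes "v \<in> color_class r"
  shows "measure_pmf.expectation (draws r d) (\<lambda>\<rho>. local_value a0 r d v (decide r d \<rho> v))
           = coin_prob r d v * local_value a0 r d v True
             + (1 - coin_prob r d v) * local_value a0 r d v False"
proof -
  have "measure_pmf.expectation (draws r d) (\<lambda>\<rho>. local_value a0 r d v (decide r d \<rho> v))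
      = measure_pmf.expectation (map_pmf (\<lambda>\<rho>. decide r d \<rho> v) (draws r d)) (local_value a0 r d v)"
    by simp
  then show ?thesis
    using decide_distribution[OF assms] greedy_prob_bounds unfolding coin_prob_def
    by (simp add: algebra_simps)
qed

lemma potential_le_expected_step:
  "potential a0 r d \<le> measure_pmf.expectation (draws r d) (\<lambda>\<rho>. potential a0 (Suc r) (decide r d \<rho>))"
proof -
  let ?avoiding = "weighted_sum (clause_value (decided_part r d) (hybrid a0 r d)) (avoiding_color r)"
  let ?p = "coin_prob r d"
  have integrable:
    "integrable (measure_pmf (draws r d)) (\<lambda>\<rho>. local_value a0 r d v (decide r d \<rho> v))" for v
  proof (rule integrable_measure_pmf_bounded)
    show "\<bar>local_value a0 r d v (decide r d \<rho> v)\<bar>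
            \<le> \<bar>local_value a0 r d v True\<bar> + \<bar>local_value a0 r d v False\<bar>" for \<rho>
      by (cases "decide r d \<rho> v") auto
  qed
  have "potential a0 r d = ?avoiding + (\<Sum>v\<in>color_class r. weighted_sum
          (clause_value (decided_part r d) (hybrid a0 r d)) (clauses_of v))"
    unfolding potential_def by (rule weighted_sum_color_split)
  also have "\<dots> \<le> ?avoiding + (\<Sum>v\<in>color_class r.
      ?p v * local_value a0 r d v True + (1 - ?p v) * local_value a0 r d v False)"
    using local_value_greedy by (simp add: sum_mono)
  also have "\<dots> = ?avoiding + (\<Sum>v\<in>color_class r.
      measure_pmf.expectation (draws r d) (\<lambda>\<rho>. local_value a0 r d v (decide r d \<rho> v)))"
    by (simp add: expected_local_value)
  also have "\<dots> = measure_pmf.expectation (draws r d) (\<lambda>\<rho>. potential a0 (Suc r) (decide r d \<rho>))"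
    unfolding potential_decide using integrable
    by (simp add: Bochner_Integration.integral_add Bochner_Integration.integral_sum
        Bochner_Integration.integrable_sum)
  finally show ?thesis .
qed

lemma potential_bounds: "0 \<le> potential a0 r d \<and> potential a0 r d \<le> weighted_sum (\<lambda>_. 2) C"
proof -
  have "0 \<le> clause_value pa a cl \<and> clause_value pa a cl \<le> 2" for pa a cl
    using clause_potential_bounds[of pa cl] by (simp add: clause_value_def)
  then have "weighted_sum (\<lambda>_. 0) C \<le> potential a0 r d" "potential a0 r d \<le> weighted_sum (\<lambda>_. 2) C"
    unfolding potential_def by (metis weighted_sum_mono[OF weights_nonneg])+
  then show ?thesis by simp
qed

lemma potential_le_expected_potential:
  "potential a0 0 (\<lambda>_. False) \<le> measure_pmf.expectation (decisions r) (potential a0 r)"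
proof (induction r)
  case (Suc r)
  let ?W = "weighted_sum (\<lambda>_. 2) C"
  let ?next = "\<lambda>d. measure_pmf.expectation (draws r d) (\<lambda>\<rho>. potential a0 (Suc r) (decide r d \<rho>))"
  have potential_abs: "\<bar>potential a0 r' d\<bar> \<le> ?W" for r' d
    using potential_bounds[of a0 r' d] by simp
  have next_abs: "\<bar>?next d\<bar> \<le> ?W" for d
  proof -
    have "integrable (measure_pmf (draws r d)) (\<lambda>\<rho>. potential a0 (Suc r) (decide r d \<rho>))"
      using potential_abs by (rule integrable_measure_pmf_bounded)
    then have "?next d \<le> ?W" using potential_bounds by (intro measure_pmf.integral_le_const) auto
    moreover have "0 \<le> ?next d" using potential_bounds by (intro integral_nonneg_AE) auto
    ultimately show ?thesis by simp
  qed
  have "measure_pmf.expectation (decisions r) (potential a0 r)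
      \<le> measure_pmf.expectation (decisions r) ?next"
    by (rule integral_mono[OF integrable_measure_pmf_bounded[OF potential_abs]
          integrable_measure_pmf_bounded[OF next_abs] potential_le_expected_step])
  also have "\<dots> = measure_pmf.expectation (decisions (Suc r)) (potential a0 (Suc r))"
    by (simp add: expectation_bind_pmf_bounded[OF potential_abs])
  finally show ?case using Suc by simp
qed simp

lemma potential_initial: "3 / 2 * sat_weight C a0 \<le> potential a0 0 (\<lambda>_. False)"
proof -
  have "decided_part 0 (\<lambda>_. False) = (\<lambda>_. None)" "hybrid a0 0 (\<lambda>_. False) = a0"
    by (simp_all add: decided_part_def hybrid_def fun_eq_iff)
  moreover have "sat_clause a0 cl \<Longrightarrow> cl \<noteq> []" for cl by auto
  ultimately have "3 / 2 * of_bool (sat_clause a0 cl)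
      \<le> clause_value (decided_part 0 (\<lambda>_. False)) (hybrid a0 0 (\<lambda>_. False)) cl" for cl
    by (auto simp: clause_value_def clause_potential_empty)
  then show ?thesis
    unfolding potential_def sat_weight_eq_weighted_sum weighted_sum_cmult[symmetric]
    using weights_nonneg by (intro weighted_sum_mono) auto
qed

lemma potential_final: "potential a0 c d = 2 * sat_weight C d"
proof -
  have "clause_value (decided_part c d) (hybrid a0 c d) cl = 2 * of_bool (sat_clause d cl)"
    if "(cl, w) \<in> set C" for cl w
  proof -
    have decided: "x \<in> V \<and> col x < c" if "x \<in> clause_vars cl" for x
      using clause_vars_in_V[OF \<open>(cl, w) \<in> set C\<close> that] color_less by blast
    have "clause_potential (decided_part c d) cl = clause_potential (\<lambda>x. Some (d x)) cl"
      by (rule clause_potential_cong) (simp add: decided_part_def decided)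
    moreover have "sat_clause (hybrid a0 c d) cl = sat_clause d cl"
      by (rule sat_clause_cong) (simp add: hybrid_def decided)
    ultimately show ?thesis by (simp add: clause_value_def clause_potential_total)
  qed
  then show ?thesis
    unfolding potential_def sat_weight_eq_weighted_sum weighted_sum_cmult[symmetric]
    by (rule weighted_sum_cong)
qed

lemma output_config: "v \<in> V \<Longrightarrow> output_assignment greedy_algo (config c d) v = d v"
  using history_nth_draw[OF color_less, of v d v]
  by (simp add: output_assignment_def config_def init_config_eq greedy_algo_def greedy_out_def)

lemma expected_sat_weight_ge:
  "3 / 4 * sat_weight C a0 \<le> measure_pmf.expectation (run greedy_algo V E (init_config V E C col c) c)
                                (\<lambda>\<sigma>. sat_weight C (output_assignment greedy_algo \<sigma>))"
proof -
  have "(\<lambda>d. sat_weight C (output_assignment greedy_algo (config c d))) = (\<lambda>d. potential a0 c d / 2)"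
  proof
    fix d
    have "sat_weight C (output_assignment greedy_algo (config c d)) = sat_weight C d"
      unfolding sat_weight_eq_weighted_sum
      by (intro weighted_sum_cong arg_cong[where f = of_bool] sat_clause_cong)
         (simp add: output_config clause_vars_in_V)
    then show "sat_weight C (output_assignment greedy_algo (config c d)) = potential a0 c d / 2"
      by (simp add: potential_final)
  qed
  then have "measure_pmf.expectation (run greedy_algo V E (init_config V E C col c) c)
               (\<lambda>\<sigma>. sat_weight C (output_assignment greedy_algo \<sigma>))
             = measure_pmf.expectation (decisions c) (potential a0 c) / 2"
    by (simp add: run_eq_decisions)
  then show ?thesis
    using potential_le_expected_potential[of a0 c] potential_initial[of a0] by simp
qed

lemma expected_sat_weight_ge_opt:
  "3 / 4 * opt_weight C \<le> measure_pmf.expectation (run greedy_algo V E (init_config V E C col c) c)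
                             (\<lambda>\<sigma>. sat_weight C (output_assignment greedy_algo \<sigma>))"
proof -
  have "opt_weight C \<le> 4 / 3 * measure_pmf.expectation (run greedy_algo V E (init_config V E C col c) c)
                                   (\<lambda>\<sigma>. sat_weight C (output_assignment greedy_algo \<sigma>))"
    unfolding opt_weight_def using expected_sat_weight_ge by (intro cSUP_least) (auto simp: field_simps)
  then show ?thesis by simp
qed

end

theorem mainTheorem15:
  "\<exists>(A :: algo) (K :: nat) (B :: nat).
     \<forall>V E C col c.
       graph V E \<longrightarrow> weighted_max2sat C \<longrightarrow> compatible V E C \<longrightarrow>
       legal_coloring V E col c \<longrightarrow>
         congest_bandwidth A V E (init_config V E C col c) (K * c) B \<and>
         measure_pmf.expectation (run A V E (init_config V E C col c) (K * c))
            (\<lambda>\<sigma>. sat_weight C (output_assignment A \<sigma>))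
           \<ge> 3 / 4 * opt_weight C"
proof (intro exI[of _ greedy_algo] exI[of _ 1] allI impI conjI)
  fix V E C col c
  assume "graph V E" "weighted_max2sat C" "compatible V E C" "legal_coloring V E col c"
  then interpret colored_instance V E C col c by unfold_locales
  show "congest_bandwidth greedy_algo V E (init_config V E C col c) (1 * c) 1"
    by (rule greedy_algo_bandwidth)
  show "3 / 4 * opt_weight C
          \<le> measure_pmf.expectation (run greedy_algo V E (init_config V E C col c) (1 * c))
              (\<lambda>\<sigma>. sat_weight C (output_assignment greedy_algo \<sigma>))"
    using expected_sat_weight_ge_opt by simp
qed

end
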